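(* Let $n\ge 1$, let $\Omega_1,\ldots,\Omega_n$ be finite sets with $|\Omega_i|=k_i\ge 1$, and let $\Omega=\prod_{i=1}^n\Omega_i$. Let $M\ge 0$ and let $f:\Omega\to[0,M]$ be weakly nested canalizing (WNC) on $\Omega$. Put $\kappa=\max_i (k_i-1)/k_i$, so that $\kappa<1$. Then $$\operatorname{AS}[f]\le \frac{M^2}{4(1-\kappa)}.$$ In particular this holds for every nested canalizing function $f:(\mathbb{Z}/k\mathbb{Z})^n\to\mathbb{Z}/k\mathbb{Z}$, with values viewed as the real numbers $0,\ldots,k-1$ (here $M=k-1$ and $\kappa=(k-1)/k$).
   Context: Let $\Omega_1,\ldots,\Omega_n$ be finite sets with $|\Omega_i|=k_i\ge1$ (sizes $k_i=1$ are allowed), $\Omega=\prod_i\Omega_i$, and let $f:\Omega\to\mathbb{R}$. Weakly canalizing: $f$ is weakly canalizing with respect to coordinate $i$ and $(a,b)\in\Omega_i\times\mathbb{R}$ if $f(x)=b$ for every $x\in\Omega$ with $x_i=a$. No condition is imposed on the values of $f$ when $x_i\ne a$; in particular constant functions are weakly canalizing. Restriction: if $k_i\ge2$, then $f\restriction_{x_i\ne a}$ denotes the restriction of $f$ to $\Omega\cap\{x: x_i\ne a\}=\Omega_1\times\cdots\times(\Omega_i\setminus\{a\})\times\cdots\times\Omega_n$, regarded again as a product of finite sets. WNC, defined by induction on $|\Omega|$: if $|\Omega|=1$, every $f$ is WNC on $\Omega$. If $|\Omega|>1$, $f$ is WNC on $\Omega$ if it is weakly canalizing with respect to some $i,a,b$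 with $k_i\ge2$ and $f\restriction_{x_i\ne a}$ is WNC on $\Omega\cap\{x:x_i\ne a\}$. Nested canalizing (NC): a segment is a subset of $\mathbb{Z}/k\mathbb{Z}=\{0,\ldots,k-1\}$ of the form $\{0,\ldots,i\}$ or $\{i,\ldots,k-1\}$. A function $f:(\mathbb{Z}/k\mathbb{Z})^n\to\mathbb{Z}/k\mathbb{Z}$ (with $k\ge2$) is NC if there exist a permutation $\sigma$ of $\{1,\ldots,n\}$, segments $A_1,\ldots,A_n$ and values $c_1,\ldots,c_{n+1}\in\mathbb{Z}/k\mathbb{Z}$ with $c_n\ne c_{n+1}$ such that: - $f(x)=c_r$ whenever $x_{\sigma(1)}\notin A_1,\ldots,x_{\sigma(r-1)}\notin A_{r-1}$ and $x_{\sigma(r)}\in A_r$, for $1\le r\le n$; - $f(x)=c_{n+1}$ whenever $x_{\sigma(r)}\notin A_r$ for all $r$. Average sensitivity: $\Omega$ carries the uniform product probability measure. For $x\in\Omega$ and a coordinate $i$, let $\operatorname{Var}_i[f](x)$ be the variance of $y_i\mapsto f(x_1,\ldots,x_{i-1},y_i,x_{i+1},\ldots,x_n)$ for $y_i$ uniform on $\Omega_i$. The influence of coordinate $i$ is $\operatorname{Inf}_i[f]=\mathbf{E}_x[\operatorname{Var}_i[f](x)]$. This equals the Fourier-analytic definition $\langle f,L_if\rangle=\sum_{\alpha_i\ne0}\hat f(\alpha)^2$ for any orthonormal basis $(\phi_\alpha)$ with $\phi_0=1$. The average sensitivity (total influence) is $\operatorname{AS}[f]=\sum_{i=1}^n\operatorname{Inf}_i[f]$.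 *)

theory Defs
  imports "HOL-Library.FuncSet" "HOL-Combinatorics.Permutations" Complex_Main
begin

text \<open>A product space Omega = Omega_0 x ... x Omega_(n-1) is represented by n and a family
  Om :: nat => 'a set; its points are the extensional functions in PiE {..<n} Om.\<close>

abbreviation prodsp :: "nat \<Rightarrow> (nat \<Rightarrow> 'a set) \<Rightarrow> (nat \<Rightarrow> 'a) set" where
  "prodsp n Om \<equiv> PiE {..<n} Om"

definition weakly_canalizing ::
  "nat \<Rightarrow> (nat \<Rightarrow> 'a set) \<Rightarrow> ((nat \<Rightarrow> 'a) \<Rightarrow> real) \<Rightarrow> nat \<Rightarrow> 'a \<Rightarrow> real \<Rightarrow> bool" where
  "weakly_canalizing n Om f i a b \<longleftrightarrow> (\<forall>x\<in>prodsp n Om. x i = a \<longrightarrow> f x = b)"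

text \<open>Weakly nested canalizing, inductively (each step strictly shrinks the domain).
  The restriction of f to {x_i ~= a} is f regarded on the smaller product space.\<close>
inductive WNC :: "nat \<Rightarrow> (nat \<Rightarrow> 'a set) \<Rightarrow> ((nat \<Rightarrow> 'a) \<Rightarrow> real) \<Rightarrow> bool" where
  base: "card (prodsp n Om) = 1 \<Longrightarrow> WNC n Om f"
| step: "\<lbrakk> card (prodsp n Om) > 1; i < n; card (Om i) \<ge> 2; a \<in> Om i;
           weakly_canalizing n Om f i a b;
           WNC n (Om(i := Om i - {a})) f \<rbrakk> \<Longrightarrow> WNC n Om f"

definition coord_var ::
  "(nat \<Rightarrow> 'a set) \<Rightarrow> ((nat \<Rightarrow> 'a) \<Rightarrow> real) \<Rightarrow> nat \<Rightarrow> (nat \<Rightarrow> 'a) \<Rightarrow> real" where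
  "coord_var Om f i x =
     (let m = (\<Sum>y\<in>Om i. f (x(i := y))) / real (card (Om i))
      in (\<Sum>y\<in>Om i. (f (x(i := y)) - m)^2) / real (card (Om i)))"

definition influence ::
  "nat \<Rightarrow> (nat \<Rightarrow> 'a set) \<Rightarrow> ((nat \<Rightarrow> 'a) \<Rightarrow> real) \<Rightarrow> nat \<Rightarrow> real" where
  "influence n Om f i =
     (\<Sum>x\<in>prodsp n Om. coord_var Om f i x) / real (card (prodsp n Om))"

definition avg_sensitivity ::
  "nat \<Rightarrow> (nat \<Rightarrow> 'a set) \<Rightarrow> ((nat \<Rightarrow> 'a) \<Rightarrow> real) \<Rightarrow> real" where
  "avg_sensitivity n Om f = (\<Sum>i<n. influence n Om f i)"

definition segment :: "nat \<Rightarrow> nat set \<Rightarrow> bool" where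
  "segment k A \<longleftrightarrow> (\<exists>i<k. A = {0..i} \<or> A = {i..k-1})"

text \<open>Nested canalizing functions (Z/kZ)^n -> Z/kZ; coordinates and the permutation are
  0-indexed, the values c_1..c_(n+1) become c 0 .. c n.\<close>
definition nested_canalizing :: "nat \<Rightarrow> nat \<Rightarrow> ((nat \<Rightarrow> nat) \<Rightarrow> nat) \<Rightarrow> bool" where
  "nested_canalizing k n f \<longleftrightarrow>
     (\<exists>\<sigma> A c. \<sigma> permutes {..<n} \<and> (\<forall>r<n. segment k (A r)) \<and> (\<forall>r\<le>n. c r < k) \<and>
        c (n - 1) \<noteq> c n \<and>
        (\<forall>x\<in>PiE {..<n} (\<lambda>_. {..<k}).
           (\<forall>r<n. (\<forall>s<r. x (\<sigma> s) \<notin> A s) \<and> x (\<sigma> r) \<in> A r \<longrightarrow> f x = c r) \<and>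
           ((\<forall>r<n. x (\<sigma> r) \<notin> A r) \<longrightarrow> f x = c n)))"

end

theory Submission
  imports Defs
begin

text \<open>Let f be weakly canalizing in coordinate i with value a, k = card (Om i) and p = 1/k, and
  let f' be f restricted to x_i \<noteq> a. On the slice x_i = a, f does not vary along any other
  coordinate j, so Inf_j[f] = (1 - p) Inf_j[f']. Along coordinate i, the law of total variance for
  Om i = {a} \<union> (Om i - {a}) gives Inf_i[f] \<le> (1 - p) Inf_i[f'] + p (1 - p) M^2. Hence
  AS[f] \<le> (1 - p) AS[f'] + p (1 - p) M^2, and since 1 - p \<le> \<kappa>, induction along the WNC
  structure gives AS[f] \<le> \<kappa> M^2 \<le> M^2 / (4 (1 - \<kappa>)). A nested canalizing function is WNC
  because on every subbox of the cube the first of its canalizing conditions that the subbox meets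
  is still canalizing there, unless the function is constant on the subbox.\<close>

section \<open>Uniform mean and variance\<close>

definition uniform_mean :: "'b set \<Rightarrow> ('b \<Rightarrow> real) \<Rightarrow> real" where
  "uniform_mean A v = sum v A / real (card A)"

definition uniform_var :: "'b set \<Rightarrow> ('b \<Rightarrow> real) \<Rightarrow> real" where
  "uniform_var A v = uniform_mean A (\<lambda>y. (v y - uniform_mean A v)^2)"

lemma coord_var_eq_uniform_var: "coord_var Om f i x = uniform_var (Om i) (\<lambda>y. f (x(i := y)))"
  unfolding coord_var_def uniform_var_def uniform_mean_def Let_def ..

lemma influence_eq_uniform_mean: "influence n Om f i = uniform_mean (prodsp n Om) (coord_var Om f i)"
  unfolding influence_def uniform_mean_def ..

lemma uniform_mean_const:
  assumes "finite A" "A \<noteq> {}" "\<And>y. y \<in> A \<Longrightarrow> v y = c"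
  shows "uniform_mean A v = c"
  using assms by (simp add: uniform_mean_def)

lemma uniform_mean_bounds:
  assumes "finite A" "A \<noteq> {}" "\<And>y. y \<in> A \<Longrightarrow> 0 \<le> v y \<and> v y \<le> M"
  shows "0 \<le> uniform_mean A v \<and> uniform_mean A v \<le> M"
proof -
  have "sum v A \<le> real (card A) * M"
    using sum_bounded_above[of A v M] assms(3) by auto
  moreover have "0 \<le> sum v A" using assms(3) by (simp add: sum_nonneg)
  moreover have "real (card A) > 0" using assms(1,2) by (simp add: card_gt_0_iff)
  ultimately show ?thesis by (simp add: uniform_mean_def field_simps)
qed

lemma uniform_var_eq_moments:
  assumes "finite A" "A \<noteq> {}"
  shows "uniform_var A v = uniform_mean A (\<lambda>y. (v y)^2) - (uniform_mean A v)^2"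
proof -
  define m where "m = uniform_mean A v"
  have c: "real (card A) > 0" using assms by (simp add: card_gt_0_iff)
  have "sum v A = real (card A) * m" using c by (simp add: m_def uniform_mean_def)
  moreover have "(\<Sum>y\<in>A. (v y - m)^2) = (\<Sum>y\<in>A. (v y)^2) - 2 * m * sum v A + real (card A) * m^2"
    by (simp add: power2_diff sum.distrib sum_subtractf sum_distrib_left[symmetric]
        sum_distrib_right[symmetric] algebra_simps)
  ultimately show ?thesis using c
    by (simp add: uniform_var_def uniform_mean_def m_def[symmetric] field_simps power2_eq_square)
qed

lemma uniform_var_const:
  assumes "finite A" "A \<noteq> {}" "\<And>y. y \<in> A \<Longrightarrow> v y = c"
  shows "uniform_var A v = 0"
  using assms by (simp add: uniform_var_def uniform_mean_const)

lemma uniform_mean_remove: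
  assumes "finite A" "a \<in> A" "A - {a} \<noteq> {}"
  shows "uniform_mean A w = (w a + (real (card A) - 1) * uniform_mean (A - {a}) w) / real (card A)"
proof -
  have "card A \<ge> 1" using assms(1,2) by (metis card_0_eq empty_iff less_one not_le)
  hence "real (card (A - {a})) = real (card A) - 1"
    using assms(1,2) by (simp add: of_nat_diff)
  moreover have "card (A - {a}) > 0" using assms by (meson card_gt_0_iff finite_Diff)
  ultimately show ?thesis
    using assms(1,2) by (simp add: uniform_mean_def sum.remove)
qed

lemma nonempty_Diff_singleton_if_card_ge_2:
  assumes "card A \<ge> 2"
  shows "A - {a} \<noteq> {}"
proof -
  have "finite A" using assms by (metis card.infinite not_numeral_le_zero)
  hence "card (A - {a}) \<ge> 1" using assms by (auto simp: card_Diff_singleton_if)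
  thus ?thesis by (metis card.empty not_one_le_zero)
qed

lemma uniform_var_remove:
  assumes "finite A" "a \<in> A" "card A \<ge> 2"
  defines "k \<equiv> real (card A)"
  shows "uniform_var A v = (1 - 1/k) * uniform_var (A - {a}) v
           + (1/k) * (1 - 1/k) * (v a - uniform_mean (A - {a}) v)^2"
proof -
  have ne: "A - {a} \<noteq> {}" "A \<noteq> {}"
    using nonempty_Diff_singleton_if_card_ge_2[OF assms(3)] assms(2) by auto
  define m where "m = uniform_mean (A - {a}) v"
  define q where "q = uniform_mean (A - {a}) (\<lambda>y. (v y)^2)"
  have k: "k \<ge> 2" using assms(3) by (simp add: k_def)
  have var_A: "uniform_var A v = ((v a)^2 + (k - 1) * q) / k - ((v a + (k - 1) * m) / k)^2"
    using uniform_var_eq_moments[OF assms(1) ne(2)] uniform_mean_remove[OF assms(1,2) ne(1)]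
    by (simp add: k_def m_def q_def)
  have var_A': "uniform_var (A - {a}) v = q - m^2"
    using uniform_var_eq_moments[of "A - {a}"] assms(1) ne(1) by (simp add: m_def q_def)
  show ?thesis
    unfolding var_A var_A' m_def[symmetric] using k
    by (simp add: field_simps) (simp add: power2_eq_square algebra_simps)
qed

lemma uniform_var_remove_le:
  assumes "finite A" "a \<in> A" "card A \<ge> 2" "\<And>y. y \<in> A \<Longrightarrow> 0 \<le> v y \<and> v y \<le> M"
  defines "k \<equiv> real (card A)"
  shows "uniform_var A v \<le> (1 - 1/k) * uniform_var (A - {a}) v + (1/k) * (1 - 1/k) * M^2"
proof -
  let ?m = "uniform_mean (A - {a}) v"
  have "0 \<le> ?m \<and> ?m \<le> M"
    using assms(1,4) nonempty_Diff_singleton_if_card_ge_2[OF assms(3)] by (intro uniform_mean_bounds) auto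
  hence "\<bar>v a - ?m\<bar> \<le> \<bar>M\<bar>" using assms(4)[OF assms(2)] by linarith
  hence "(v a - ?m)^2 \<le> M^2" by (simp add: abs_le_square_iff)
  moreover have "0 \<le> (1/k) * (1 - 1/k)" using assms(3) by (simp add: k_def)
  ultimately have "(1/k) * (1 - 1/k) * (v a - ?m)^2 \<le> (1/k) * (1 - 1/k) * M^2"
    by (rule mult_left_mono)
  thus ?thesis unfolding uniform_var_remove[OF assms(1-3), folded k_def] by simp
qed

lemma uniform_mean_mono:
  assumes "\<And>x. x \<in> A \<Longrightarrow> v x \<le> w x"
  shows "uniform_mean A v \<le> uniform_mean A w"
  using assms by (simp add: uniform_mean_def divide_right_mono sum_mono)

lemma uniform_mean_affine:
  assumes "finite A" "A \<noteq> {}"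
  shows "uniform_mean A (\<lambda>x. c * v x + d) = c * uniform_mean A v + d"
  using assms by (simp add: uniform_mean_def sum.distrib sum_distrib_left[symmetric] field_simps)

section \<open>Sums over product spaces\<close>

lemma sum_PiE_coord_invariant:
  fixes F :: "('i \<Rightarrow> 'a) \<Rightarrow> real"
  assumes "i \<in> I" and invariant: "\<And>x y. F (x(i := y)) = F x"
  shows "sum F (PiE I Om) = real (card (Om i)) * sum F (PiE (I - {i}) Om)"
proof -
  let ?R = "PiE (I - {i}) Om" and ?upd = "\<lambda>(y, g). g(i := y)"
  have split: "PiE I Om = ?upd ` (Om i \<times> ?R)"
    using PiE_insert_eq[of i "I - {i}" Om] assms(1) by (simp add: insert_absorb)
  have inj: "inj_on ?upd (Om i \<times> ?R)"
  proof (rule inj_onI, clarify)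
    fix y g y' g' assume g: "g \<in> ?R" "g' \<in> ?R" and eq: "g(i := y) = g'(i := y')"
    have gi: "g i = g' i" using PiE_arb[OF g(1)] PiE_arb[OF g(2)] by simp
    have "y = y'" using fun_cong[OF eq, of i] by simp
    moreover have "g = g'"
    proof
      fix j show "g j = g' j" using fun_cong[OF eq, of j] gi by (cases "j = i") auto
    qed
    ultimately show "y = y' \<and> g = g'" ..
  qed
  have "sum F (PiE I Om) = (\<Sum>(y, g)\<in>Om i \<times> ?R. F (g(i := y)))"
    unfolding split sum.reindex[OF inj] by (rule sum.cong) auto
  also have "\<dots> = (\<Sum>y\<in>Om i. \<Sum>g\<in>?R. F (g(i := y)))"
    by (rule sum.cartesian_product[symmetric])
  finally show ?thesis by (simp add: invariant)
qed

lemma card_PiE_split_coord: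
  assumes "i \<in> I"
  shows "real (card (PiE I Om)) = real (card (Om i)) * real (card (PiE (I - {i}) Om))"
  using sum_PiE_coord_invariant[OF assms, of "\<lambda>_. 1"] by simp

lemma uniform_mean_PiE_coord_invariant:
  fixes F :: "('i \<Rightarrow> 'a) \<Rightarrow> real"
  assumes "i \<in> I" "finite (Om i)" "Om i \<noteq> {}" "finite B" "B \<noteq> {}"
    and invariant: "\<And>x y. F (x(i := y)) = F x"
  shows "uniform_mean (PiE I (Om(i := B))) F = uniform_mean (PiE I Om) F"
proof -
  have R: "PiE (I - {i}) (Om(i := B)) = PiE (I - {i}) Om" by (rule PiE_cong) simp
  have "card (Om i) \<noteq> 0" "card B \<noteq> 0" using assms(2-5) by auto
  thus ?thesis
    unfolding uniform_mean_def sum_PiE_coord_invariant[OF assms(1), of F, OF invariant]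
      card_PiE_split_coord[OF assms(1)]
    by (simp add: R)
qed

lemma card_PiE_remove:
  assumes "i \<in> I" "finite (Om i)" "a \<in> Om i"
  shows "real (card (PiE I (Om(i := Om i - {a}))))
           = (1 - 1 / real (card (Om i))) * real (card (PiE I Om))"
proof -
  have R: "PiE (I - {i}) (Om(i := Om i - {a})) = PiE (I - {i}) Om" by (rule PiE_cong) simp
  have "card (Om i) \<ge> 1" using assms(2,3) by (metis card_0_eq empty_iff less_one not_le)
  moreover have card_Diff: "real (card (Om i - {a})) = real (card (Om i)) - 1"
    using assms(3) calculation by (simp add: of_nat_diff)
  ultimately show ?thesis
    unfolding card_PiE_split_coord[OF assms(1), of "Om(i := Om i - {a})"]
      card_PiE_split_coord[OF assms(1), of Om] fun_upd_same R card_Diff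
    by (simp add: field_simps)
qed

lemma card_prodsp_pos:
  assumes "\<forall>j<n. finite (B j) \<and> B j \<noteq> {}"
  shows "card (prodsp n B) > 0"
proof -
  have "finite (prodsp n B)" using assms by (intro finite_PiE) auto
  moreover have "prodsp n B \<noteq> {}" using assms by (simp add: PiE_eq_empty_iff)
  ultimately show ?thesis by (simp add: card_gt_0_iff)
qed

lemma fun_upd_in_PiE_lessThan:
  assumes "x \<in> prodsp n Om" "j < n" "y \<in> Om j"
  shows "x(j := y) \<in> prodsp n Om"
  using PiE_fun_upd[OF assms(3,1)] assms(2) by (simp add: insert_absorb)

section \<open>Average sensitivity of WNC functions\<close>

lemma coord_var_const_line:
  assumes "finite (Om j)" "Om j \<noteq> {}" "\<And>y. y \<in> Om j \<Longrightarrow> f (x(j := y)) = c"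
  shows "coord_var Om f j x = 0"
  unfolding coord_var_eq_uniform_var using assms by (rule uniform_var_const)

lemma influence_remove_canalizing_value:
  assumes wc: "weakly_canalizing n Om f i a b" and "i < n" "a \<in> Om i" "card (Om i) \<ge> 2"
    and "j < n" "j \<noteq> i" and fin: "\<forall>j<n. finite (Om j) \<and> Om j \<noteq> {}"
  shows "influence n Om f j = (1 - 1 / real (card (Om i))) * influence n (Om(i := Om i - {a})) f j"
proof -
  define Om' where "Om' = Om(i := Om i - {a})"
  let ?S = "prodsp n Om" and ?S' = "prodsp n Om'"
  have finS: "finite ?S" using fin by (intro finite_PiE) auto
  have card_S: "real (card ?S) > 0" using card_prodsp_pos[OF fin] by simp
  define p where "p = 1 - 1 / real (card (Om i))"
  have "p > 0" using assms(4) by (simp add: p_def)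
  have vanish: "coord_var Om f j x = 0" if x: "x \<in> ?S - ?S'" for x
  proof -
    have "x i = a" using x assms(2) by (auto simp: Om'_def PiE_iff split: if_splits)
    hence "f (x(j := y)) = b" if "y \<in> Om j" for y
      using wc fun_upd_in_PiE_lessThan[of x n Om j y] x that assms(5,6)
      unfolding weakly_canalizing_def by auto
    thus ?thesis using fin assms(5) by (intro coord_var_const_line) auto
  qed
  have "?S' \<subseteq> ?S" unfolding Om'_def by (rule PiE_mono) auto
  moreover have "coord_var Om f j = coord_var Om' f j"
    using assms(6) by (simp add: fun_eq_iff coord_var_def Om'_def)
  ultimately have sum_eq: "sum (coord_var Om f j) ?S = sum (coord_var Om' f j) ?S'"
    using vanish by (intro sum.mono_neutral_cong_right[OF finS]) auto
  have card_eq: "real (card ?S') = p * real (card ?S)"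
    unfolding Om'_def p_def using assms(2,3) fin by (intro card_PiE_remove) auto
  show ?thesis
    unfolding influence_def sum_eq card_eq Om'_def[symmetric] p_def[symmetric]
    using card_S \<open>p > 0\<close> by simp
qed

lemma influence_remove_value_le:
  assumes "i < n" "a \<in> Om i" "card (Om i) \<ge> 2"
    and fin: "\<forall>j<n. finite (Om j) \<and> Om j \<noteq> {}"
    and bounded: "\<forall>x\<in>prodsp n Om. 0 \<le> f x \<and> f x \<le> M"
  defines "p \<equiv> 1 / real (card (Om i))"
  shows "influence n Om f i \<le> (1 - p) * influence n (Om(i := Om i - {a})) f i + p * (1 - p) * M^2"
proof -
  define Om' where "Om' = Om(i := Om i - {a})"
  let ?S = "prodsp n Om"
  have Om'_i: "Om' i \<noteq> {}" "finite (Om' i)"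
    using nonempty_Diff_singleton_if_card_ge_2[OF assms(3)] fin assms(1) by (auto simp: Om'_def)
  have pointwise: "coord_var Om f i x \<le> (1 - p) * coord_var Om' f i x + p * (1 - p) * M^2"
    if x: "x \<in> ?S" for x
    unfolding coord_var_eq_uniform_var p_def Om'_def fun_upd_same
    using fin assms(1-3) bounded fun_upd_in_PiE_lessThan[OF x assms(1)]
    by (intro uniform_var_remove_le) auto
  have "influence n Om f i \<le> uniform_mean ?S (\<lambda>x. (1 - p) * coord_var Om' f i x + p * (1 - p) * M^2)"
    unfolding influence_eq_uniform_mean using pointwise by (rule uniform_mean_mono)
  also have "\<dots> = (1 - p) * uniform_mean ?S (coord_var Om' f i) + p * (1 - p) * M^2"
    using fin by (intro uniform_mean_affine finite_PiE) (auto simp: PiE_eq_empty_iff)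
  also have "uniform_mean ?S (coord_var Om' f i) = influence n Om' f i"
    unfolding influence_eq_uniform_mean Om'_def using fin assms(1) Om'_i
    by (intro uniform_mean_PiE_coord_invariant[symmetric]) (auto simp: Om'_def coord_var_def)
  finally show ?thesis unfolding Om'_def .
qed

lemma avg_sensitivity_remove_canalizing_le:
  assumes wc: "weakly_canalizing n Om f i a b" and "i < n" "a \<in> Om i" "card (Om i) \<ge> 2"
    and fin: "\<forall>j<n. finite (Om j) \<and> Om j \<noteq> {}"
    and bounded: "\<forall>x\<in>prodsp n Om. 0 \<le> f x \<and> f x \<le> M"
  defines "p \<equiv> 1 / real (card (Om i))"
  shows "avg_sensitivity n Om f
           \<le> (1 - p) * avg_sensitivity n (Om(i := Om i - {a})) f + p * (1 - p) * M^2"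
proof -
  let ?Om' = "Om(i := Om i - {a})"
  have "avg_sensitivity n Om f
          \<le> (\<Sum>j<n. (1 - p) * influence n ?Om' f j + (if j = i then p * (1 - p) * M^2 else 0))"
    unfolding avg_sensitivity_def
  proof (rule sum_mono)
    fix j assume "j \<in> {..<n}"
    thus "influence n Om f j
            \<le> (1 - p) * influence n ?Om' f j + (if j = i then p * (1 - p) * M^2 else 0)"
      using influence_remove_value_le[OF assms(2-4) fin bounded]
        influence_remove_canalizing_value[OF wc assms(2-4) _ _ fin, of j]
      by (cases "j = i") (auto simp: p_def)
  qed
  also have "\<dots> = (1 - p) * avg_sensitivity n ?Om' f + p * (1 - p) * M^2"
    using assms(2) by (simp add: sum.distrib sum_distrib_left avg_sensitivity_def)
  finally show ?thesis .
qed

lemma influence_eq_0_if_card_1: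
  assumes "card (Om j) = 1"
  shows "influence n Om f j = 0"
proof -
  obtain c where "Om j = {c}" using assms by (auto simp: card_1_singleton_iff)
  hence "coord_var Om f j x = 0" for x by (intro coord_var_const_line) auto
  thus ?thesis by (simp add: influence_def)
qed

lemma card_ratio_remove_le:
  assumes "\<forall>j<n. finite (Om j)" "i < n" "a \<in> Om i" "card (Om i) \<ge> 2"
    and "\<forall>j<n. (real (card (Om j)) - 1) / real (card (Om j)) \<le> \<kappa>"
  shows "\<forall>j<n. (real (card ((Om(i := Om i - {a})) j)) - 1) / real (card ((Om(i := Om i - {a})) j)) \<le> \<kappa>"
proof -
  have "real (card (Om i - {a})) = real (card (Om i)) - 1" using assms(1-4) by (simp add: of_nat_diff)
  hence "(real (card (Om i - {a})) - 1) / real (card (Om i - {a}))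
           \<le> (real (card (Om i)) - 1) / real (card (Om i))"
    using assms(4) by (simp add: field_simps)
  thus ?thesis using assms(2,5) by (auto intro: order_trans)
qed

lemma avg_sensitivity_WNC_le:
  assumes "WNC n Om f"
    and "\<forall>j<n. finite (Om j) \<and> Om j \<noteq> {}"
    and "\<forall>x\<in>prodsp n Om. 0 \<le> f x \<and> f x \<le> M"
    and "\<forall>j<n. (real (card (Om j)) - 1) / real (card (Om j)) \<le> \<kappa>" and "0 \<le> \<kappa>"
  shows "avg_sensitivity n Om f \<le> M^2 * \<kappa>"
  using assms
proof (induction rule: WNC.induct)
  case (base n Om f)
  have "(\<Prod>j<n. card (Om j)) = 1" using base.hyps by (simp add: card_PiE)
  hence "influence n Om f j = 0" if "j < n" for j
    using that prod_eq_1_iff[of "{..<n}" "\<lambda>j. card (Om j)"] by (intro influence_eq_0_if_card_1) simp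
  thus ?case using base.prems by (simp add: avg_sensitivity_def)
next
  case (step n Om i a f b)
  define p where "p = 1 / real (card (Om i))"
  let ?Om' = "Om(i := Om i - {a})"
  have k: "real (card (Om i)) \<ge> 2" using step.hyps(3) by simp
  hence p: "0 \<le> p" "1 - p \<ge> 0" by (simp_all add: p_def)
  have "1 - p = (real (card (Om i)) - 1) / real (card (Om i))"
    using k by (simp add: p_def diff_divide_distrib)
  hence p_\<kappa>: "1 - p \<le> \<kappa>" using step.prems(3)[rule_format, OF step.hyps(2)] by (rule ord_eq_le_trans)
  have "\<forall>j<n. finite (?Om' j) \<and> ?Om' j \<noteq> {}"
    using step.prems(1) nonempty_Diff_singleton_if_card_ge_2[OF step.hyps(3)] by auto
  moreover have "prodsp n ?Om' \<subseteq> prodsp n Om" by (rule PiE_mono) auto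
  hence "\<forall>x\<in>prodsp n ?Om'. 0 \<le> f x \<and> f x \<le> M" using step.prems(2) by (metis subsetD)
  moreover have "\<forall>j<n. (real (card (?Om' j)) - 1) / real (card (?Om' j)) \<le> \<kappa>"
    using step.prems(1,3) step.hyps(2-4) by (intro card_ratio_remove_le) auto
  ultimately have IH: "avg_sensitivity n ?Om' f \<le> M^2 * \<kappa>"
    using step.IH step.prems(4) by blast
  have "avg_sensitivity n Om f \<le> (1 - p) * avg_sensitivity n ?Om' f + p * (1 - p) * M^2"
    using avg_sensitivity_remove_canalizing_le[OF step.hyps(5,2,4,3) step.prems(1,2)]
    unfolding p_def .
  also have "\<dots> \<le> (1 - p) * (M^2 * \<kappa>) + p * (M^2 * \<kappa>)"
  proof (rule add_mono)
    show "(1 - p) * avg_sensitivity n ?Om' f \<le> (1 - p) * (M^2 * \<kappa>)"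
      using IH p(2) by (rule mult_left_mono)
    have "(1 - p) * M^2 \<le> M^2 * \<kappa>" using p_\<kappa> by (subst mult.commute, rule mult_left_mono) simp
    hence "p * ((1 - p) * M^2) \<le> p * (M^2 * \<kappa>)" using p(1) by (rule mult_left_mono)
    thus "p * (1 - p) * M^2 \<le> p * (M^2 * \<kappa>)" by (simp only: mult.assoc)
  qed
  also have "\<dots> = M^2 * \<kappa>" by (simp add: algebra_simps)
  finally show ?case .
qed

section \<open>Nested canalizing functions are WNC\<close>

definition has_canalizing_coord :: "nat \<Rightarrow> (nat \<Rightarrow> 'a set) \<Rightarrow> ((nat \<Rightarrow> 'a) \<Rightarrow> real) \<Rightarrow> bool" where
  "has_canalizing_coord n B f \<longleftrightarrow>
     (\<exists>i<n. \<exists>a\<in>B i. card (B i) \<ge> 2 \<and> (\<exists>b. weakly_canalizing n B f i a b))"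

lemma WNC_if_subboxes_canalizing:
  assumes fin: "\<forall>j<n. finite (Om j) \<and> Om j \<noteq> {}"
    and canalizing: "\<And>B. \<forall>j<n. B j \<subseteq> Om j \<and> B j \<noteq> {} \<Longrightarrow> card (prodsp n B) > 1
                       \<Longrightarrow> has_canalizing_coord n B f"
  shows "WNC n Om f"
proof -
  have "WNC n B f" if "\<forall>j<n. B j \<subseteq> Om j \<and> B j \<noteq> {}" for B
    using that
  proof (induction "card (prodsp n B)" arbitrary: B rule: less_induct)
    case less
    have fin_B: "\<forall>j<n. finite (B j) \<and> B j \<noteq> {}" using less.prems fin by (meson finite_subset)
    hence pos: "card (prodsp n B) > 0" by (rule card_prodsp_pos)
    show ?case
    proof (cases "card (prodsp n B) = 1")
      case True
      thus ?thesis by (rule WNC.base)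
    next
      case False
      with pos have gt: "card (prodsp n B) > 1" by linarith
      then obtain i a b where i: "i < n" "a \<in> B i" "card (B i) \<ge> 2"
        and wc: "weakly_canalizing n B f i a b"
        using canalizing[OF less.prems] unfolding has_canalizing_coord_def by blast
      let ?B' = "B(i := B i - {a})"
      have "real (card (prodsp n ?B')) = (1 - 1 / real (card (B i))) * real (card (prodsp n B))"
        using i fin_B by (intro card_PiE_remove) auto
      moreover have "0 < 1 / real (card (B i)) * real (card (prodsp n B))"
        using pos i(3) by simp
      ultimately have "card (prodsp n ?B') < card (prodsp n B)" by (simp add: algebra_simps)
      moreover have "\<forall>j<n. ?B' j \<subseteq> Om j \<and> ?B' j \<noteq> {}"
        using less.prems nonempty_Diff_singleton_if_card_ge_2[OF i(3)] by auto
      ultimately have "WNC n ?B' f" by (rule less.hyps)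
      thus ?thesis by (rule WNC.step[OF gt i(1,3,2) wc])
    qed
  qed
  thus ?thesis using fin by blast
qed

lemma has_canalizing_coord_if_constant:
  assumes fin: "\<forall>j<n. finite (B j) \<and> B j \<noteq> {}" and "card (prodsp n B) > 1"
    and const: "\<forall>x\<in>prodsp n B. f x = c"
  shows "has_canalizing_coord n B f"
proof -
  have "\<exists>j<n. card (B j) \<ge> 2"
  proof (rule ccontr)
    assume "\<not> (\<exists>j<n. card (B j) \<ge> 2)"
    moreover have "card (B j) \<noteq> 0" if "j < n" for j using fin that by simp
    ultimately have "(\<Prod>j<n. card (B j)) = 1" by (intro prod.neutral) force
    with assms(2) show False by (simp add: card_PiE)
  qed
  then obtain j where j: "j < n" "card (B j) \<ge> 2" by blast
  moreover obtain a where "a \<in> B j" using fin j(1) by blast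
  moreover have "weakly_canalizing n B f j a c" using const by (simp add: weakly_canalizing_def)
  ultimately show ?thesis unfolding has_canalizing_coord_def by blast
qed

lemma has_canalizing_coord_if_canalizing:
  assumes fin: "\<forall>j<n. finite (B j) \<and> B j \<noteq> {}" and "card (prodsp n B) > 1"
    and "i < n" "a \<in> B i" and wc: "weakly_canalizing n B f i a b"
  shows "has_canalizing_coord n B f"
proof (cases "card (B i) \<ge> 2")
  case True
  thus ?thesis using assms(3-5) unfolding has_canalizing_coord_def by blast
next
  case False
  moreover have "card (B i) \<noteq> 0" using fin assms(3) by simp
  ultimately have "card (B i) = 1" by linarith
  then obtain z where "B i = {z}" by (auto simp: card_1_singleton_iff)
  hence "B i = {a}" using assms(4) by simp
  hence "\<forall>x\<in>prodsp n B. f x = b" using wc assms(3) by (auto simp: weakly_canalizing_def PiE_iff)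
  with fin assms(2) show ?thesis by (rule has_canalizing_coord_if_constant)
qed

lemma nested_canalizing_less:
  assumes "nested_canalizing k n g" and x: "x \<in> PiE {..<n} (\<lambda>_. {..<k})"
  shows "g x < k"
proof -
  obtain \<sigma> A c where c: "\<forall>r\<le>n. c r < k" and
    H: "\<forall>x\<in>PiE {..<n} (\<lambda>_. {..<k}).
           (\<forall>r<n. (\<forall>s<r. x (\<sigma> s) \<notin> A s) \<and> x (\<sigma> r) \<in> A r \<longrightarrow> g x = c r) \<and>
           ((\<forall>r<n. x (\<sigma> r) \<notin> A r) \<longrightarrow> g x = c n)"
    using assms(1) unfolding nested_canalizing_def by blast
  show ?thesis
  proof (cases "\<exists>r<n. x (\<sigma> r) \<in> A r")
    case True
    then obtain r where "r < n" "x (\<sigma> r) \<in> A r" "\<forall>s<r. x (\<sigma> s) \<notin> A s"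
      using exists_least_iff[of "\<lambda>r. r < n \<and> x (\<sigma> r) \<in> A r"] by (metis order.strict_trans)
    thus ?thesis using H x c by auto
  next
    case False
    thus ?thesis using H x c by auto
  qed
qed

lemma nested_canalizing_has_canalizing_coord:
  assumes "nested_canalizing k n g"
    and sub: "\<forall>j<n. B j \<subseteq> {..<k} \<and> B j \<noteq> {}" and gt: "card (prodsp n B) > 1"
  shows "has_canalizing_coord n B (\<lambda>x. real (g x))"
proof -
  obtain \<sigma> A c where \<sigma>: "\<sigma> permutes {..<n}" and
    H: "\<forall>x\<in>PiE {..<n} (\<lambda>_. {..<k}).
           (\<forall>r<n. (\<forall>s<r. x (\<sigma> s) \<notin> A s) \<and> x (\<sigma> r) \<in> A r \<longrightarrow> g x = c r) \<and>
           ((\<forall>r<n. x (\<sigma> r) \<notin> A r) \<longrightarrow> g x = c n)"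
    using assms(1) unfolding nested_canalizing_def by blast
  have \<sigma>_less: "\<sigma> r < n" if "r < n" for r using permutes_in_image[OF \<sigma>] that by simp
  have fin: "\<forall>j<n. finite (B j) \<and> B j \<noteq> {}" using sub by (meson finite_lessThan finite_subset)
  have in_cube: "x \<in> PiE {..<n} (\<lambda>_. {..<k})" if "x \<in> prodsp n B" for x
    using that sub by (auto simp: PiE_iff)
  have in_B: "x (\<sigma> r) \<in> B (\<sigma> r)" if "x \<in> prodsp n B" "r < n" for x r
    using that \<sigma>_less by (auto simp: PiE_iff)
  show ?thesis
  proof (cases "\<exists>r<n. B (\<sigma> r) \<inter> A r \<noteq> {}")
    case True
    then obtain r where r: "r < n" "B (\<sigma> r) \<inter> A r \<noteq> {}"
      and before_r: "\<forall>s<r. B (\<sigma> s) \<inter> A s = {}"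
      using exists_least_iff[of "\<lambda>r. r < n \<and> B (\<sigma> r) \<inter> A r \<noteq> {}"] by (metis order.strict_trans)
    then obtain a where a: "a \<in> B (\<sigma> r)" "a \<in> A r" by blast
    have "weakly_canalizing n B (\<lambda>x. real (g x)) (\<sigma> r) a (real (c r))"
      unfolding weakly_canalizing_def
    proof (intro ballI impI)
      fix x assume x: "x \<in> prodsp n B" "x (\<sigma> r) = a"
      have "x (\<sigma> s) \<notin> A s" if "s < r" for s
        using before_r in_B[OF x(1), of s] that r(1) by auto
      thus "real (g x) = real (c r)" using H in_cube[OF x(1)] r(1) x(2) a(2) by auto
    qed
    with fin gt \<sigma>_less[OF r(1)] a(1) show ?thesis by (rule has_canalizing_coord_if_canalizing)
  next
    case False
    have "\<forall>x\<in>prodsp n B. real (g x) = real (c n)"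
    proof
      fix x assume x: "x \<in> prodsp n B"
      hence "\<forall>r<n. x (\<sigma> r) \<notin> A r" using False in_B by blast
      thus "real (g x) = real (c n)" using H in_cube[OF x] by simp
    qed
    with fin gt show ?thesis by (rule has_canalizing_coord_if_constant)
  qed
qed

lemma WNC_nested_canalizing:
  assumes "k \<ge> 1" "nested_canalizing k n g"
  shows "WNC n (\<lambda>_. {..<k}) (\<lambda>x. real (g x))"
  using assms
  by (intro WNC_if_subboxes_canalizing nested_canalizing_has_canalizing_coord) (auto simp: lessThan_empty_iff)

lemma mult_le_divide_four_one_minus:
  fixes M \<kappa> :: real
  assumes "\<kappa> < 1"
  shows "M^2 * \<kappa> \<le> M^2 / (4 * (1 - \<kappa>))"
proof -
  have "\<kappa> * (4 * (1 - \<kappa>)) \<le> 1" using zero_le_power2[of "2 * \<kappa> - 1"]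
    by (simp add: power2_eq_square algebra_simps)
  hence "M^2 * \<kappa> * (4 * (1 - \<kappa>)) \<le> M^2"
    using mult_left_mono[of _ 1 "M^2"] by (simp add: mult.assoc)
  thus ?thesis using assms by (simp add: pos_le_divide_eq)
qed

lemma avg_sensitivity_WNC_bound:
  assumes "n \<ge> 1" and fin: "\<And>i. i < n \<Longrightarrow> finite (Om i) \<and> Om i \<noteq> {}"
    and bounded: "\<And>x. x \<in> prodsp n Om \<Longrightarrow> 0 \<le> f x \<and> f x \<le> M"
    and "WNC n Om f"
  shows "avg_sensitivity n Om f
           \<le> M^2 / (4 * (1 - Max ((\<lambda>i. (real (card (Om i)) - 1) / real (card (Om i))) ` {..<n})))"
proof -
  let ?ratio = "\<lambda>i. (real (card (Om i)) - 1) / real (card (Om i))"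
  define \<kappa> where "\<kappa> = Max (?ratio ` {..<n})"
  have "\<kappa> \<in> ?ratio ` {..<n}"
    unfolding \<kappa>_def using assms(1) by (intro Max_in) (auto simp: lessThan_empty_iff)
  then obtain i where "i < n" "\<kappa> = ?ratio i" by blast
  moreover have "card (Om i) \<ge> 1" using fin[OF \<open>i < n\<close>] by (simp add: Suc_le_eq card_gt_0_iff)
  ultimately have \<kappa>: "0 \<le> \<kappa>" "\<kappa> < 1" by simp_all
  have "\<forall>j<n. ?ratio j \<le> \<kappa>" unfolding \<kappa>_def by simp
  hence "avg_sensitivity n Om f \<le> M^2 * \<kappa>"
    using avg_sensitivity_WNC_le[OF assms(4)] fin bounded \<kappa>(1) by blast
  also have "\<dots> \<le> M^2 / (4 * (1 - \<kappa>))" using \<kappa>(2) by (rule mult_le_divide_four_one_minus)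
  finally show ?thesis unfolding \<kappa>_def .
qed

lemma avg_sensitivity_nested_canalizing_bound:
  assumes "k \<ge> 2" "nested_canalizing k n g"
  shows "avg_sensitivity n (\<lambda>_. {..<k}) (\<lambda>x. real (g x))
           \<le> (real k - 1)^2 / (4 * (1 - (real k - 1) / real k))"
proof -
  have "\<forall>x\<in>PiE {..<n} (\<lambda>_. {..<k}). 0 \<le> real (g x) \<and> real (g x) \<le> real k - 1"
  proof
    fix x assume "x \<in> PiE {..<n} (\<lambda>_. {..<k})"
    hence "g x + 1 \<le> k" using nested_canalizing_less[OF assms(2)] by (simp add: Suc_le_eq)
    thus "0 \<le> real (g x) \<and> real (g x) \<le> real k - 1" by linarith
  qed
  hence "avg_sensitivity n (\<lambda>_. {..<k}) (\<lambda>x. real (g x)) \<le> (real k - 1)^2 * ((real k - 1) / real k)"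
    using WNC_nested_canalizing[of k n g] assms by (intro avg_sensitivity_WNC_le) (auto simp: lessThan_empty_iff)
  also have "\<dots> \<le> (real k - 1)^2 / (4 * (1 - (real k - 1) / real k))"
    using assms(1) by (intro mult_le_divide_four_one_minus) simp
  finally show ?thesis .
qed

theorem theorem1:
  fixes n :: nat and Om :: "nat \<Rightarrow> 'a set" and f :: "(nat \<Rightarrow> 'a) \<Rightarrow> real" and M :: real
  assumes "n \<ge> 1"
    and "\<And>i. i < n \<Longrightarrow> finite (Om i) \<and> Om i \<noteq> {}"
    and "M \<ge> 0"
    and "\<And>x. x \<in> prodsp n Om \<Longrightarrow> 0 \<le> f x \<and> f x \<le> M"
    and "WNC n Om f"
  shows "avg_sensitivity n Om f
           \<le> M^2 / (4 * (1 - Max ((\<lambda>i. (real (card (Om i)) - 1) / real (card (Om i))) ` {..<n})))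
         \<and> (\<forall>(k::nat) (g :: (nat \<Rightarrow> nat) \<Rightarrow> nat). k \<ge> 2 \<longrightarrow> nested_canalizing k n g \<longrightarrow>
              avg_sensitivity n (\<lambda>_. {..<k}) (\<lambda>x. real (g x))
                \<le> (real k - 1)^2 / (4 * (1 - (real k - 1) / real k)))"
  using avg_sensitivity_WNC_bound[OF assms(1,2,4,5)] avg_sensitivity_nested_canalizing_bound
  by blast

end
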